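(* Let $\mathbb{E}$ be a finite-dimensional Euclidean space, $\mathcal{K}\subseteq\mathbb{E}$ a closed convex cone, $\mathcal{A}:\mathbb{E}\to\mathbb{R}^m$ a surjective linear map and $b\in\mathbb{R}^m$, and let $\mathcal{F}=\{x\in\mathcal{K}:\mathcal{A}x=b\}\neq\emptyset$. Suppose strict feasibility fails for $\mathcal{F}$ and let $\bar{\mathcal{K}}$ be the cone obtained by the facial reduction process. Then $\mathcal{A}(\operatorname{span}\bar{\mathcal{K}})$ is a subspace of dimension at most $m-\operatorname{maxsd}(\mathcal{F})$. Moreover, $\{x\in\bar{\mathcal{K}}:\mathcal{A}x=b\}$ contains at least $\operatorname{maxsd}(\mathcal{F})$ implicitly redundant constraints, i.e. $m-\dim\mathcal{A}(\operatorname{span}\bar{\mathcal{K}})\ge\operatorname{maxsd}(\mathcal{F})$.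
   Context: Strict feasibility of $\{x\in C:\mathcal{A}x=b\}$ with respect to a closed convex cone $C$ means that this set contains a point of $\operatorname{relint}(C)$. For a cone $C$, $C^*$ is its dual cone and $C^\perp$ its orthogonal complement. Facial reduction process: set $\mathcal{K}^0=\mathcal{K}$, $k=0$; while strict feasibility fails for $\{x\in\mathcal{K}^k:\mathcal{A}x=b\}$ with respect to $\mathcal{K}^k$, increase $k$ by one, choose $y^k\in\mathbb{R}^m$ with $\mathcal{A}^*y^k\in(\mathcal{K}^{k-1})^*\setminus(\mathcal{K}^{k-1})^\perp$ and $\langle b,y^k\rangle=0$, and set $\mathcal{K}^k=\mathcal{K}^{k-1}\cap(\mathcal{A}^*y^k)^\perp$. The cone obtained by the process is the final $\bar{\mathcal{K}}=\mathcal{K}^k=\mathcal{K}\cap\bigcap_{i=1}^k(\mathcal{A}^*y^i)^\perp$. The max-singularity degree $\operatorname{maxsd}(\mathcal{F})$ is the largest number of (nontrivial) iterations over all runs of this facial reduction process on $\mathcal{F}$. The number of implicitly redundant constraints in $\{x\in\bar{\mathcal{K}}:\mathcal{A}x=b\}$ is the number of redundant equalities among $\mathcal{A}x=b$ when $x$ is restricted to $\operatorname{span}\bar{\mathcal{K}}$, i.e. $m$ minus the rank of $\mathcal{A}$ restricted to $\operatorname{span}\bar{\mathcal{K}}$. *)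

theory Defs
  imports "HOL-Analysis.Analysis"
begin

definition dual_cone :: "'a::real_inner set \<Rightarrow> 'a set" where
  "dual_cone C = {y. \<forall>x\<in>C. 0 \<le> inner y x}"

definition strictly_feasible ::
  "'a::euclidean_space set \<Rightarrow> ('a \<Rightarrow> 'b::euclidean_space) \<Rightarrow> 'b \<Rightarrow> bool" where
  "strictly_feasible C A b \<longleftrightarrow> (\<exists>x\<in>rel_interior C. A x = b)"

definition fr_cone ::
  "'a::euclidean_space set \<Rightarrow> ('a \<Rightarrow> 'b::euclidean_space) \<Rightarrow> 'b list \<Rightarrow> 'a set" where
  "fr_cone K A ys = K \<inter> (\<Inter>y\<in>set ys. orthogonal_comp {adjoint A y})"

definition fr_run ::
  "'a::euclidean_space set \<Rightarrow> ('a \<Rightarrow> 'b::euclidean_space) \<Rightarrow> 'b \<Rightarrow> 'b list \<Rightarrow> bool" where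
  "fr_run K A b ys \<longleftrightarrow>
     (\<forall>i<length ys.
        \<not> strictly_feasible (fr_cone K A (take i ys)) A b \<and>
        adjoint A (ys ! i) \<in> dual_cone (fr_cone K A (take i ys))
                              - orthogonal_comp (fr_cone K A (take i ys)) \<and>
        inner b (ys ! i) = 0) \<and>
     strictly_feasible (fr_cone K A ys) A b"

definition maxsd ::
  "'a::euclidean_space set \<Rightarrow> ('a \<Rightarrow> 'b::euclidean_space) \<Rightarrow> 'b \<Rightarrow> nat" where
  "maxsd K A b = Sup {length ys | ys. fr_run K A b ys}"

definition implicitly_redundant ::
  "'a::euclidean_space set \<Rightarrow> ('a \<Rightarrow> real^'m) \<Rightarrow> nat" where
  "implicitly_redundant Kbar A = CARD('m) - dim (A ` span Kbar)"

end

theory Submission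
  imports Defs
begin

text \<open>
  Let \<open>x\<^sub>0\<close> be a feasible point in the relative interior of the final cone \<open>K\<^sub>*\<close> of
  a run. Each certificate \<open>z\<close> of any other run satisfies \<open>\<langle>\<A>\<^sup>* z, x\<^sub>0\<rangle> = \<langle>z, b\<rangle> = 0\<close>, so the
  hyperplane \<open>(\<A>\<^sup>* z)\<^sup>\<bottom>\<close> supports the current cone at a relative interior point of
  \<open>K\<^sub>*\<close> and therefore contains all of \<open>K\<^sub>*\<close>. Hence \<open>\<A>(span K\<^sub>*)\<close> is orthogonal to every
  certificate of every run. The certificates of a run are linearly independent: some
  \<open>x \<in> K\<^sup>k\<^sup>-\<^sup>1\<close> has \<open>\<A>x\<close> orthogonal to \<open>y\<^sup>1, \<dots>, y\<^sup>k\<^sup>-\<^sup>1\<close> but not to \<open>y\<^sup>k\<close>. Choosing a run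
  of length \<open>maxsd\<close> leaves at most \<open>m - maxsd\<close> dimensions for \<open>\<A>(span K\<^sub>*)\<close>.
\<close>

lemma subset_supporting_hyperplane_rel_interior:
  fixes S :: "'a::real_inner set"
  assumes "convex S" and "\<And>x. x \<in> S \<Longrightarrow> 0 \<le> c \<bullet> x"
    and "z \<in> rel_interior S" and "c \<bullet> z = 0"
  shows "S \<subseteq> {x. c \<bullet> x = 0}"
proof -
  have "(S \<inter> {x. c \<bullet> x = 0}) face_of S"
    using assms(1,2) by (rule face_of_Int_supporting_hyperplane_ge)
  moreover have "z \<in> S"
    using assms(3) rel_interior_subset by blast
  ultimately show ?thesis
    using subset_of_face_of[of "S \<inter> {x. c \<bullet> x = 0}" S S] assms(3,4) by blast
qed

lemma orthogonal_comp_span: "orthogonal_comp (span S) = orthogonal_comp S"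
proof
  show "orthogonal_comp (span S) \<subseteq> orthogonal_comp S"
    by (rule orthogonal_comp_anti_mono) (rule span_superset)
  show "orthogonal_comp S \<subseteq> orthogonal_comp (span S)"
    by (auto simp: orthogonal_comp_def orthogonal_commute intro: orthogonal_to_span)
qed

lemma dim_orthogonal_comp:
  fixes S :: "'a::euclidean_space set"
  shows "dim (orthogonal_comp S) + dim S = DIM('a)"
proof -
  have "orthogonal_comp S = orthogonal_comp (span S)"
    by (rule orthogonal_comp_span[symmetric])
  also have "\<dots> = {y \<in> UNIV. \<forall>x \<in> span S. orthogonal x y}"
    by (auto simp: orthogonal_comp_def)
  finally show ?thesis
    using dim_subspace_orthogonal_to_vectors[of "span S" UNIV] by simp
qed

lemma fr_cone_Nil [simp]: "fr_cone K A [] = K"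
  by (simp add: fr_cone_def)

lemma fr_cone_subset: "fr_cone K A ys \<subseteq> K"
  by (simp add: fr_cone_def)

lemma fr_cone_take_Suc:
  "i < length ys \<Longrightarrow>
    fr_cone K A (take (Suc i) ys) = fr_cone K A (take i ys) \<inter> orthogonal_comp {adjoint A (ys ! i)}"
  by (auto simp: fr_cone_def take_Suc_conv_app_nth)

lemma convex_fr_cone: "convex K \<Longrightarrow> convex (fr_cone K A ys)"
  unfolding fr_cone_def
  by (intro convex_Int convex_INT) (auto intro: subspace_imp_convex subspace_orthogonal_comp)

lemma fr_cone_subset_orthogonal_comp:
  "fr_cone K A ys \<subseteq> orthogonal_comp (adjoint A ` set ys)"
  by (auto simp: fr_cone_def orthogonal_comp_def)

lemma fr_runD:
  assumes "fr_run K A b ys" and "i < length ys"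
  shows "adjoint A (ys ! i) \<in> dual_cone (fr_cone K A (take i ys))"
    and "adjoint A (ys ! i) \<notin> orthogonal_comp (fr_cone K A (take i ys))"
    and "b \<bullet> ys ! i = 0"
  using assms by (auto simp: fr_run_def)

lemma fr_run_final_cone_subset:
  assumes "convex K" and "linear A" and "fr_run K A b ys" and "fr_run K A b zs"
  shows "fr_cone K A ys \<subseteq> fr_cone K A zs"
proof -
  obtain x0 where x0: "x0 \<in> rel_interior (fr_cone K A ys)" "A x0 = b"
    using assms(3) by (auto simp: fr_run_def strictly_feasible_def)
  have "fr_cone K A ys \<subseteq> fr_cone K A (take i zs)" if "i \<le> length zs" for i
    using that
  proof (induction i)
    case 0
    show ?case by (simp add: fr_cone_subset)
  next
    case (Suc i)
    then have IH: "fr_cone K A ys \<subseteq> fr_cone K A (take i zs)" and i: "i < length zs"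
      by simp_all
    let ?c = "adjoint A (zs ! i)"
    have "\<And>x. x \<in> fr_cone K A ys \<Longrightarrow> 0 \<le> ?c \<bullet> x"
      using fr_runD(1)[OF assms(4) i] IH by (auto simp: dual_cone_def)
    moreover have "?c \<bullet> x0 = 0"
      using fr_runD(3)[OF assms(4) i] x0(2)
      by (simp add: inner_commute adjoint_works[OF assms(2)])
    ultimately have "fr_cone K A ys \<subseteq> {x. ?c \<bullet> x = 0}"
      using subset_supporting_hyperplane_rel_interior[OF convex_fr_cone[OF assms(1)] _ x0(1)]
      by blast
    with IH show ?case
      by (auto simp: fr_cone_take_Suc[OF i] orthogonal_comp_def orthogonal_def)
  qed
  from this[of "length zs"] show ?thesis by simp
qed

lemma fr_run_certificate_notin_span:
  assumes "linear A" and "fr_run K A b zs" and "i < length zs"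
  shows "zs ! i \<notin> span (set (take i zs))"
proof
  assume in_span: "zs ! i \<in> span (set (take i zs))"
  obtain x where x: "x \<in> fr_cone K A (take i zs)" "\<not> orthogonal (adjoint A (zs ! i)) x"
    using fr_runD(2)[OF assms(2,3)] by (auto simp: orthogonal_comp_def orthogonal_commute)
  have "set (take i zs) \<subseteq> orthogonal_comp {A x}"
    using x(1) fr_cone_subset_orthogonal_comp[of K A "take i zs"]
    by (auto simp: orthogonal_comp_def orthogonal_def adjoint_works[OF assms(1)] inner_commute)
  then have "span (set (take i zs)) \<subseteq> orthogonal_comp {A x}"
    by (rule span_minimal[OF _ subspace_orthogonal_comp])
  with in_span x(2) show False
    by (auto simp: orthogonal_comp_def orthogonal_def adjoint_works[OF assms(1)] inner_commute)
qed

lemma dim_set_fr_run: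
  assumes "linear A" and "fr_run K A b zs"
  shows "dim (set zs) = length zs"
proof -
  have "dim (set (take i zs)) = i" if "i \<le> length zs" for i
    using that
  proof (induction i)
    case (Suc i)
    then show ?case
      using fr_run_certificate_notin_span[OF assms, of i]
      by (simp add: take_Suc_conv_app_nth dim_insert)
  qed simp
  from this[of "length zs"] show ?thesis by simp
qed

lemma fr_run_length_le:
  fixes A :: "'a::euclidean_space \<Rightarrow> 'b::euclidean_space"
  assumes "linear A" and "fr_run K A b zs"
  shows "length zs \<le> DIM('b)"
  using dim_set_fr_run[OF assms] dim_subset_UNIV[of "set zs"] by simp

lemma maxsd_attained:
  fixes A :: "'a::euclidean_space \<Rightarrow> 'b::euclidean_space"
  assumes "linear A" and "fr_run K A b ys"
  obtains zs where "fr_run K A b zs" and "length zs = maxsd K A b"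
proof -
  let ?L = "{length zs | zs. fr_run K A b zs}"
  have fin: "finite ?L"
    by (rule finite_subset[of _ "{..DIM('b)}"]) (auto dest: fr_run_length_le[OF assms(1)])
  have ne: "?L \<noteq> {}"
    using assms(2) by blast
  have "maxsd K A b = Max ?L"
    unfolding maxsd_def Sup_nat_def using ne by (simp only: if_False)
  with Max_in[OF fin ne] that show ?thesis by auto
qed

lemma image_span_fr_cone_subset_orthogonal_comp:
  assumes "convex K" and "linear A" and "fr_run K A b ys" and "fr_run K A b zs"
  shows "A ` span (fr_cone K A ys) \<subseteq> orthogonal_comp (set zs)"
proof -
  have "span (fr_cone K A ys) \<subseteq> orthogonal_comp (adjoint A ` set zs)"
    using fr_run_final_cone_subset[OF assms] fr_cone_subset_orthogonal_comp[of K A zs]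
    by (intro span_minimal subspace_orthogonal_comp) blast
  then show ?thesis
    by (auto simp: orthogonal_comp_def orthogonal_def adjoint_works[OF assms(2)] inner_commute)
qed

lemma dim_image_span_fr_cone_add_length_le:
  fixes A :: "'a::euclidean_space \<Rightarrow> 'b::euclidean_space"
  assumes "convex K" and "linear A" and "fr_run K A b ys" and "fr_run K A b zs"
  shows "dim (A ` span (fr_cone K A ys)) + length zs \<le> DIM('b)"
proof -
  have "dim (A ` span (fr_cone K A ys)) \<le> dim (orthogonal_comp (set zs))"
    by (rule dim_subset[OF image_span_fr_cone_subset_orthogonal_comp[OF assms]])
  with dim_orthogonal_comp[of "set zs"] dim_set_fr_run[OF assms(2,4)]
  show ?thesis by linarith
qed

theorem corollary4p2:
  fixes K :: "'a::euclidean_space set"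
    and A :: "'a \<Rightarrow> real^'m"
    and b :: "real^'m"
    and ys :: "(real^'m) list"
  assumes "closed K" and "convex K" and "cone K"
    and "linear A" and "surj A"
    and "{x\<in>K. A x = b} \<noteq> {}"
    and "\<not> strictly_feasible K A b"
    and "fr_run K A b ys"
  shows "subspace (A ` span (fr_cone K A ys))
       \<and> int (dim (A ` span (fr_cone K A ys))) \<le> int CARD('m) - int (maxsd K A b)
       \<and> implicitly_redundant (fr_cone K A ys) A \<ge> maxsd K A b
       \<and> int CARD('m) - int (dim (A ` span (fr_cone K A ys))) \<ge> int (maxsd K A b)"
proof -
  obtain zs where zs: "fr_run K A b zs" "length zs = maxsd K A b"
    using maxsd_attained[OF assms(4,8)] .
  have "dim (A ` span (fr_cone K A ys)) + maxsd K A b \<le> CARD('m)"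
    using dim_image_span_fr_cone_add_length_le[OF assms(2,4,8) zs(1)] zs(2) by simp
  moreover have "subspace (A ` span (fr_cone K A ys))"
    using linear_subspace_image[OF assms(4) subspace_span] .
  ultimately show ?thesis
    by (auto simp: implicitly_redundant_def)
qed

end
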